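(* Let $G$ be a graph, let $s\ge3$ be an integer, and let $xTy$ be a thread of $G$ (possibly $x=y$, when $T$ is a cycle-thread). Let $T'$ be the path obtained from $T$ by deleting its end-vertices $x,y$ (for a cycle-thread, by deleting the single vertex $x=y$), and let $G'=G-V(T')$. Then: (a1) if $s\ge4$ and $e(T)\ge 4$, then $\lambda(G')\ge v(G')/(s+1)$ implies $\lambda(G)\ge v(G)/(s+1)$; (a2) if $s=3$ and $v(T')\in\{3m,3m+1\}$ for some integer $m\ge1$, then $\lambda(G')\ge v(G')/4$ implies $\lambda(G)\ge v(G)/4$.
   Context: All graphs are finite and simple. $v(G)$, $e(G)$ are the numbers of vertices and edges. $\lambda(G)$ denotes the maximum number of pairwise vertex-disjoint subgraphs of $G$ each of which is a path with exactly two edges. A path-thread of $G$ is a path $P$ in $G$, maximal under inclusion among paths, such that every internal vertex of $P$ has degree $2$ in $G$; its end-vertices are $x,y$, written $xPy$. A cycle-thread of $G$ is a cycle $C$ of $G$ in which all vertices except exactly one have degree $2$ in $G$; both "end-vertices" $x=y$ of it are this exceptional vertex. A thread is a path-thread or a cycle-thread. *)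

theory Defs
  imports Complex_Main "HOL-Library.Disjoint_Sets"
begin

definition graph :: "'a set \<Rightarrow> 'a set set \<Rightarrow> bool" where
  "graph V E \<longleftrightarrow> finite V \<and> (\<forall>e\<in>E. \<exists>u v. e = {u, v} \<and> u \<noteq> v \<and> u \<in> V \<and> v \<in> V)"

definition deg :: "'a set \<Rightarrow> 'a set set \<Rightarrow> 'a \<Rightarrow> nat" where
  "deg V E u = card {v \<in> V. {u, v} \<in> E}"

definition del_verts :: "'a set \<Rightarrow> 'a set set \<Rightarrow> 'a set \<Rightarrow> 'a set" where
  "del_verts V E X = V - X"
definition del_edges :: "'a set \<Rightarrow> 'a set set \<Rightarrow> 'a set \<Rightarrow> 'a set set" where
  "del_edges V E X = {e \<in> E. e \<inter> X = {}}"

definition is_P3 :: "'a set set \<Rightarrow> 'a set \<Rightarrow> bool" where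
  "is_P3 E S \<longleftrightarrow> (\<exists>a b c. S = {a, b, c} \<and> distinct [a, b, c] \<and> {a, b} \<in> E \<and> {b, c} \<in> E)"

definition P3_packing :: "'a set \<Rightarrow> 'a set set \<Rightarrow> 'a set set \<Rightarrow> bool" where
  "P3_packing V E P \<longleftrightarrow> (\<forall>S\<in>P. S \<subseteq> V \<and> is_P3 E S) \<and> disjoint P"

definition lambda :: "'a set \<Rightarrow> 'a set set \<Rightarrow> nat" where
  "lambda V E = Max {card P | P. P3_packing V E P}"

definition is_path :: "'a set \<Rightarrow> 'a set set \<Rightarrow> 'a list \<Rightarrow> bool" where
  "is_path V E p \<longleftrightarrow> p \<noteq> [] \<and> distinct p \<and> set p \<subseteq> V \<and>
     (\<forall>i. Suc i < length p \<longrightarrow> {p ! i, p ! Suc i} \<in> E)"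

definition path_edges :: "'a list \<Rightarrow> 'a set set" where
  "path_edges p = {{p ! i, p ! Suc i} | i. Suc i < length p}"

definition path_sub :: "'a list \<Rightarrow> 'a list \<Rightarrow> bool" where
  "path_sub p q \<longleftrightarrow> set p \<subseteq> set q \<and> path_edges p \<subseteq> path_edges q"

definition internal :: "'a list \<Rightarrow> 'a set" where
  "internal p = set (tl (butlast p))"

definition deg2_path :: "'a set \<Rightarrow> 'a set set \<Rightarrow> 'a list \<Rightarrow> bool" where
  "deg2_path V E p \<longleftrightarrow> is_path V E p \<and> (\<forall>v\<in>internal p. deg V E v = 2)"

definition path_thread :: "'a set \<Rightarrow> 'a set set \<Rightarrow> 'a list \<Rightarrow> bool" where
  "path_thread V E p \<longleftrightarrow> deg2_path V E p \<and>
     (\<forall>q. deg2_path V E q \<and> path_sub p q \<longrightarrow> path_sub q p)"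

definition is_cycle :: "'a set \<Rightarrow> 'a set set \<Rightarrow> 'a list \<Rightarrow> bool" where
  "is_cycle V E c \<longleftrightarrow> length c \<ge> 3 \<and> distinct c \<and> set c \<subseteq> V \<and>
     (\<forall>i. Suc i < length c \<longrightarrow> {c ! i, c ! Suc i} \<in> E) \<and> {last c, hd c} \<in> E"

text \<open>Cycle-thread, listed starting from its exceptional vertex hd c.\<close>
definition cycle_thread :: "'a set \<Rightarrow> 'a set set \<Rightarrow> 'a list \<Rightarrow> bool" where
  "cycle_thread V E c \<longleftrightarrow> is_cycle V E c \<and> deg V E (hd c) \<noteq> 2 \<and>
     (\<forall>v\<in>set (tl c). deg V E v = 2)"

definition thread :: "'a set \<Rightarrow> 'a set set \<Rightarrow> bool \<Rightarrow> 'a list \<Rightarrow> bool" where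
  "thread V E cyc t = (if cyc then cycle_thread V E t else path_thread V E t)"

definition thread_inner :: "bool \<Rightarrow> 'a list \<Rightarrow> 'a set" where
  "thread_inner cyc t = (if cyc then set (tl t) else internal t)"

definition thread_edges :: "bool \<Rightarrow> 'a list \<Rightarrow> nat" where
  "thread_edges cyc t = (if cyc then length t else length t - 1)"

end

theory Submission
  imports Defs
begin

text \<open>The inner vertices of a thread form a path on v(T') vertices, which splits into
  \<lfloor>v(T')/3\<rfloor> vertex-disjoint P3's. Since every P3 of G' avoids V(T'), these can be
  added to a maximum packing of G', so \<lambda>(G) \<ge> \<lambda>(G') + \<lfloor>v(T')/3\<rfloor> while
  v(G) = v(G') + v(T'). Both claims therefore reduce to v(T') \<le> (s+1)\<lfloor>v(T')/3\<rfloor>: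
  for s \<ge> 4 this needs only v(T') \<ge> 3, which e(T) \<ge> 4 guarantees, and for s = 3 it
  holds when v(T') = 3m or 3m + 1.\<close>

lemma is_P3_mono: "E' \<subseteq> E \<Longrightarrow> is_P3 E' S \<Longrightarrow> is_P3 E S"
  unfolding is_P3_def by blast

lemma is_P3_nonempty: "is_P3 E S \<Longrightarrow> S \<noteq> {}"
  unfolding is_P3_def by blast

lemma finite_P3_packing: "finite V \<Longrightarrow> P3_packing V E P \<Longrightarrow> finite P"
  unfolding P3_packing_def by (meson PowI finite_Pow_iff rev_finite_subset subsetI)

lemma finite_P3_packing_cards: "finite V \<Longrightarrow> finite {card P | P. P3_packing V E P}"
proof -
  assume "finite V"
  moreover have "{card P | P. P3_packing V E P} \<subseteq> card ` Pow (Pow V)"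
    unfolding P3_packing_def by auto
  ultimately show ?thesis by (meson finite_Pow_iff finite_imageI rev_finite_subset)
qed

lemma card_le_lambda: "finite V \<Longrightarrow> P3_packing V E P \<Longrightarrow> card P \<le> lambda V E"
  unfolding lambda_def using finite_P3_packing_cards by (intro Max_ge) auto

lemma lambda_attained:
  assumes "finite V"
  obtains P where "P3_packing V E P" and "card P = lambda V E"
proof -
  have "P3_packing V E {}" unfolding P3_packing_def by simp
  then have "{card P | P. P3_packing V E P} \<noteq> {}" by blast
  from Max_in[OF finite_P3_packing_cards[OF assms] this] show ?thesis
    using that unfolding lambda_def by auto
qed

lemma P3_packing_insert:
  assumes "P3_packing V E Q" and "S \<subseteq> V" and "is_P3 E S" and "\<forall>B\<in>Q. S \<inter> B = {}"
  shows "P3_packing V E (insert S Q)"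
  using assms unfolding P3_packing_def pairwise_insert disjnt_def by blast

lemma P3_packing_of_path:
  assumes "distinct xs" and "set xs \<subseteq> V" and "successively (\<lambda>u v. {u, v} \<in> E) xs"
  shows "\<exists>Q. P3_packing V E Q \<and> card Q = length xs div 3 \<and> \<Union>Q \<subseteq> set xs"
  using assms
proof (induction "length xs" arbitrary: xs rule: less_induct)
  case less
  show ?case
  proof (cases "length xs < 3")
    case True
    then show ?thesis by (intro exI[of _ "{}"]) (simp add: P3_packing_def)
  next
    case False
    then obtain a b c zs where xs: "xs = a # b # c # zs"
      by (metis One_nat_def Suc_le_length_iff not_less numeral_3_eq_3)
    obtain Q where Q: "P3_packing V E Q" "card Q = length zs div 3" "\<Union>Q \<subseteq> set zs"
      using less.hyps[of zs] less.prems xs by (auto simp: successively_Cons)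
    have "is_P3 E {a, b, c}"
      unfolding is_P3_def using less.prems xs by (auto simp: insert_commute)
    then have packing: "P3_packing V E (insert {a, b, c} Q)"
      using Q less.prems xs by (intro P3_packing_insert) auto
    have "{a, b, c} \<notin> Q" using Q(3) less.prems(1) xs by auto
    then have "card (insert {a, b, c} Q) = length xs div 3"
      using Q(2,3) xs by (simp add: finite_UnionD finite_subset)
    with packing show ?thesis using Q(3) xs by (intro exI[of _ "insert {a, b, c} Q"]) auto
  qed
qed

lemma lambda_del_verts_add_le:
  assumes "finite V" and Q: "P3_packing V E Q" and "\<Union>Q \<subseteq> X"
  shows "lambda (del_verts V E X) (del_edges V E X) + card Q \<le> lambda V E"
proof -
  obtain P where P: "P3_packing (V - X) (del_edges V E X) P"
    and card_P: "card P = lambda (del_verts V E X) (del_edges V E X)"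
    using lambda_attained[of "del_verts V E X"] assms(1) unfolding del_verts_def by auto
  have "del_edges V E X \<subseteq> E" unfolding del_edges_def by blast
  then have P_in_G: "S \<subseteq> V \<and> is_P3 E S" if "S \<in> P" for S
    using P that is_P3_mono unfolding P3_packing_def by blast
  have disj: "\<Union>P \<inter> \<Union>Q = {}" using P assms(3) unfolding P3_packing_def by blast
  then have "P3_packing V E (P \<union> Q)"
    using P Q P_in_G unfolding P3_packing_def by (auto intro: disjoint_union)
  then have "card (P \<union> Q) \<le> lambda V E" by (rule card_le_lambda[OF assms(1)])
  moreover have "P \<inter> Q = {}"
    using disj P_in_G is_P3_nonempty by blast
  moreover have "finite P" "finite Q"
    using finite_P3_packing[OF _ P] finite_P3_packing[OF assms(1) Q] assms(1) by simp_all
  ultimately show ?thesis using card_P by (simp add: card_Un_disjoint)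
qed

lemma thread_inner_path:
  assumes "thread V E cyc t"
  obtains xs where "distinct xs" and "set xs \<subseteq> V" and "successively (\<lambda>u v. {u, v} \<in> E) xs"
    and "set xs = thread_inner cyc t" and "thread_edges cyc t \<le> length xs + 1"
proof (cases cyc)
  case True
  then have t: "is_cycle V E t" using assms unfolding thread_def cycle_thread_def by simp
  show ?thesis
  proof (rule that[of "tl t"])
    show "distinct (tl t)" using t unfolding is_cycle_def by (simp add: distinct_tl)
    show "set (tl t) \<subseteq> V" using t unfolding is_cycle_def by (cases t) auto
    show "successively (\<lambda>u v. {u, v} \<in> E) (tl t)"
      using t unfolding is_cycle_def successively_conv_nth by (simp add: nth_tl)
    show "set (tl t) = thread_inner cyc t" using True by (simp add: thread_inner_def)
    show "thread_edges cyc t \<le> length (tl t) + 1" using True by (simp add: thread_edges_def)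
  qed
next
  case False
  then have t: "is_path V E t" using assms unfolding thread_def path_thread_def deg2_path_def by simp
  show ?thesis
  proof (rule that[of "tl (butlast t)"])
    show "distinct (tl (butlast t))" using t unfolding is_path_def
      by (simp add: distinct_tl distinct_butlast)
    have "set (tl (butlast t)) \<subseteq> set t" by (cases t) (auto dest: in_set_butlastD)
    then show "set (tl (butlast t)) \<subseteq> V" using t unfolding is_path_def by blast
    show "successively (\<lambda>u v. {u, v} \<in> E) (tl (butlast t))"
      using t unfolding is_path_def successively_conv_nth by (simp add: nth_tl nth_butlast)
    show "set (tl (butlast t)) = thread_inner cyc t" using False by (simp add: thread_inner_def internal_def)
    show "thread_edges cyc t \<le> length (tl (butlast t)) + 1" using False by (simp add: thread_edges_def)
  qed
qed

lemma thread_inner_subset: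
  assumes "thread V E cyc t"
  shows "thread_inner cyc t \<subseteq> V"
  by (rule thread_inner_path[OF assms]) blast

lemma thread_edges_le_card_thread_inner:
  assumes "thread V E cyc t"
  shows "thread_edges cyc t \<le> card (thread_inner cyc t) + 1"
proof (rule thread_inner_path[OF assms])
  fix xs assume "distinct xs" "set xs = thread_inner cyc t" "thread_edges cyc t \<le> length xs + 1"
  then show ?thesis using distinct_card by metis
qed

lemma lambda_del_thread_inner_add_le:
  assumes "finite V" and "thread V E cyc t"
  shows "lambda (del_verts V E (thread_inner cyc t)) (del_edges V E (thread_inner cyc t))
           + card (thread_inner cyc t) div 3 \<le> lambda V E"
proof -
  obtain xs where xs: "distinct xs" "set xs \<subseteq> V" "successively (\<lambda>u v. {u, v} \<in> E) xs"
    and X: "set xs = thread_inner cyc t"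
    using thread_inner_path[OF assms(2)] by metis
  obtain Q where Q: "P3_packing V E Q" and card_Q: "card Q = length xs div 3"
    and "\<Union>Q \<subseteq> thread_inner cyc t"
    using P3_packing_of_path[OF xs] X by metis
  then have "lambda (del_verts V E (thread_inner cyc t)) (del_edges V E (thread_inner cyc t))
               + card Q \<le> lambda V E"
    by (intro lambda_del_verts_add_le[OF assms(1)])
  moreover have "card (thread_inner cyc t) = length xs"
    using X distinct_card[OF xs(1)] by simp
  ultimately show ?thesis using card_Q by simp
qed

lemma density_bound_extend:
  fixes c :: real
  assumes "c > 0" and "n' / c \<le> l'" and "l' + q \<le> l" and "k \<le> q * c"
  shows "(n' + k) / c \<le> l"
proof -
  have "(n' + k) / c = n' / c + k / c" by (simp add: add_divide_distrib)
  also have "k / c \<le> q" using assms(1,4) by (simp add: divide_le_eq)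
  then have "n' / c + k / c \<le> l' + q" using assms(2) by linarith
  finally show ?thesis using assms(3) by linarith
qed

lemma density_bound_del_thread_inner:
  assumes "finite V" and "thread V E cyc t" and "c > 0"
    and "card (thread_inner cyc t) \<le> card (thread_inner cyc t) div 3 * c"
    and "real (card (del_verts V E (thread_inner cyc t))) / real c
           \<le> lambda (del_verts V E (thread_inner cyc t)) (del_edges V E (thread_inner cyc t))"
  shows "real (card V) / real c \<le> lambda V E"
proof -
  let ?X = "thread_inner cyc t"
  have X: "?X \<subseteq> V" using thread_inner_subset[OF assms(2)] .
  have card_V: "card V = card (del_verts V E ?X) + card ?X"
    unfolding del_verts_def
    using card_Diff_subset[OF finite_subset[OF X assms(1)] X] card_mono[OF assms(1) X] by simp
  have "real (card ?X) \<le> real (card ?X div 3) * real c"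
    using assms(4) by (metis of_nat_le_iff of_nat_mult)
  moreover have "real (lambda (del_verts V E ?X) (del_edges V E ?X)) + real (card ?X div 3)
                   \<le> real (lambda V E)"
    using lambda_del_thread_inner_add_le[OF assms(1,2)] by linarith
  ultimately have "(real (card (del_verts V E ?X)) + real (card ?X)) / real c \<le> real (lambda V E)"
    using density_bound_extend assms(3,5) by simp
  then show ?thesis using card_V by simp
qed

theorem lemma3p1:
  fixes V :: "'a set" and E :: "'a set set" and s :: nat and cyc :: bool and t :: "'a list"
  assumes "graph V E" and "s \<ge> 3" and "thread V E cyc t"
  defines "V' \<equiv> del_verts V E (thread_inner cyc t)"
      and "E' \<equiv> del_edges V E (thread_inner cyc t)"
  shows "(s \<ge> 4 \<and> thread_edges cyc t \<ge> 4 \<longrightarrow>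
            real (lambda V' E') \<ge> real (card V') / real (s + 1) \<longrightarrow>
            real (lambda V E) \<ge> real (card V) / real (s + 1))
       \<and> (s = 3 \<and> (\<exists>m::nat. m \<ge> 1 \<and> (card (thread_inner cyc t) = 3 * m \<or> card (thread_inner cyc t) = 3 * m + 1)) \<longrightarrow>
            real (lambda V' E') \<ge> real (card V') / 4 \<longrightarrow>
            real (lambda V E) \<ge> real (card V) / 4)"
proof -
  have "finite V" using assms(1) unfolding graph_def by simp
  note extend = density_bound_del_thread_inner[OF this assms(3), folded V'_def E'_def]
  define k where "k = card (thread_inner cyc t)"
  show ?thesis
    unfolding k_def[symmetric]
  proof (intro conjI impI)
    assume s: "s \<ge> 4 \<and> thread_edges cyc t \<ge> 4"
      and dense: "real (card V') / real (s + 1) \<le> lambda V' E'"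
    have "3 \<le> k" using s thread_edges_le_card_thread_inner[OF assms(3)] k_def by simp
    then have "k \<le> k div 3 * 5" by presburger
    also have "\<dots> \<le> k div 3 * (s + 1)" using s by simp
    finally show "real (card V) / real (s + 1) \<le> lambda V E"
      using extend[of "s + 1"] dense k_def by simp
  next
    assume "s = 3 \<and> (\<exists>m\<ge>1. k = 3 * m \<or> k = 3 * m + 1)"
      and dense: "real (card V') / 4 \<le> lambda V' E'"
    from this(1) have "k \<le> k div 3 * 4" by presburger
    then show "real (card V) / 4 \<le> lambda V E"
      using extend[of 4] dense k_def by simp
  qed
qed

end
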